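(* Let $\mathcal A_+,\mathcal A_-\subseteq\mathbb Z^n$ be disjoint finite sets, $\mathcal A=\mathcal A_+\cup\mathcal A_-$, and assume $\mathcal A_-\neq\varnothing$ and $\operatorname{vertices}(\operatorname{conv}(\mathcal A))\subseteq\mathcal A_+$. Let $\Gamma$ be the smallest face of $\operatorname{conv}(\mathcal A)$ containing $\mathcal A_-$, and let $J$ be the set of faces $\Gamma'$ of $\Gamma$ with $\Gamma'\cap\mathcal A_-\neq\varnothing$. Let $f\in\mathcal S(\mathcal A_+,\mathcal A_-)$ have nonsigned coefficients $c\in\mathbb R^{\mathcal A}_{>0}$, and let $h:\mathcal A\to\mathbb Z$ be a height function lifting $\mathcal A_-$. Define $$S:=\bigcup_{\Gamma'\in J}\{t\in\mathbb R_{>0}:\ F^{\Gamma'}(\pi_{\Gamma'}(c\star t^h),x)=0\text{ for some }x\in\mathbb R^n_{>0}\}.$$ Then (i) $S$ has a minimum $t_*$; and (ii) $f$ is copositive if and only if $t_*\ge 1$.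
   Context: For disjoint finite $\mathcal A_+,\mathcal A_-\subseteq\mathbb R^n$, a signomial with signed support $(\mathcal A_+,\mathcal A_-)$ is a function $f:\mathbb R^n_{>0}\to\mathbb R$, $f(x)=\sum_{a\in\mathcal A_+}c_ax^a-\sum_{b\in\mathcal A_-}c_bx^b$ with all $c_a,c_b>0$ (the nonsigned coefficients), where $x^a=\prod_i x_i^{a_i}$. $\mathcal A=\mathcal A_+\cup\mathcal A_-$ is the support; $\mathcal S(\mathcal A_+,\mathcal A_-)$ is the set of such signomials, identified with $\mathbb R^{\mathcal A}_{>0}$ via the nonsigned coefficients; $f_c$ denotes the signomial with nonsigned coefficients $c$. $f$ is copositive if $f(x)\ge0$ for all $x\in\mathbb R^n_{>0}$. The critical system of $(\mathcal A_+,\mathcal A_-)$ is $F(c,x)=(f_c(x),x_1\partial_{x_1}f_c(x),\dots,x_n\partial_{x_n}f_c(x))$ for $c\in\mathbb R^{\mathcal A}_{>0}$, $x\in\mathbb R^n_{>0}$. For a nonempty face $\Gamma'$ of $\operatorname{conv}(\mathcal A)$, $\mathcal A^{\Gamma'}_\pm=\mathcal A_\pm\cap\Gamma'$, $\mathcal A^{\Gamma'}=\mathcal A\cap\Gamma'$, $\pi_{\Gamma'}:\mathbb R^{\mathcal A}\to\mathbb R^{\mathcal A^{\Gamma'}}$ is the coordinate projection, and $F^{\Gamma'}$ is the critical system of $(\mathcal A^{\Gamma'}_+,\mathcal A^{\Gamma'}_-)$ (i.e. of the truncation $f^{\Gamma'}$, obtained by keeping only the terms of $f$ with exponent in $\Gamma'$).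 A height function $h:\mathcal A\to\mathbb Z$ lifts $\mathcal A_-$ if $h(a)>0$ for $a\in\mathcal A_-$ and $h(a)=0$ for $a\in\mathcal A_+$; $c\star t^h$ denotes the vector $(c_at^{h(a)})_{a\in\mathcal A}$. *)

theory Defs
  imports "HOL-Analysis.Analysis"
begin

text \<open>Exponent vectors live in real^'n (with integer coordinates where required);
  the monomial x^a for x in the positive orthant.\<close>
definition monom :: "real^'n \<Rightarrow> real^'n \<Rightarrow> real" where
  "monom a x = (\<Prod>i\<in>UNIV. (x $ i) powr (a $ i))"

definition signomial :: "(real^'n) set \<Rightarrow> (real^'n) set \<Rightarrow> (real^'n \<Rightarrow> real) \<Rightarrow> real^'n \<Rightarrow> real" where
  "signomial Ap Am c x = (\<Sum>a\<in>Ap. c a * monom a x) - (\<Sum>b\<in>Am. c b * monom b x)"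

definition positive_orthant :: "(real^'n) set" where
  "positive_orthant = {x. \<forall>i. 0 < x $ i}"

definition partial :: "(real^'n \<Rightarrow> real) \<Rightarrow> 'n \<Rightarrow> real^'n \<Rightarrow> real" where
  "partial g i x = deriv (\<lambda>s. g (\<chi> j. if j = i then s else x $ j)) (x $ i)"

definition critical_zero :: "(real^'n) set \<Rightarrow> (real^'n) set \<Rightarrow> (real^'n \<Rightarrow> real) \<Rightarrow> real^'n \<Rightarrow> bool" where
  "critical_zero Ap Am c x \<longleftrightarrow>
     signomial Ap Am c x = 0 \<and> (\<forall>i. x $ i * partial (signomial Ap Am c) i x = 0)"

definition copositive :: "(real^'n) set \<Rightarrow> (real^'n) set \<Rightarrow> (real^'n \<Rightarrow> real) \<Rightarrow> bool" where
  "copositive Ap Am c \<longleftrightarrow> (\<forall>x\<in>positive_orthant. 0 \<le> signomial Ap Am c x)"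

definition lifts :: "(real^'n \<Rightarrow> int) \<Rightarrow> (real^'n) set \<Rightarrow> (real^'n) set \<Rightarrow> bool" where
  "lifts h Ap Am \<longleftrightarrow> (\<forall>a\<in>Am. 0 < h a) \<and> (\<forall>a\<in>Ap. h a = 0)"

definition star_pow :: "(real^'n \<Rightarrow> real) \<Rightarrow> real \<Rightarrow> (real^'n \<Rightarrow> int) \<Rightarrow> real^'n \<Rightarrow> real" where
  "star_pow c t h a = c a * t powr (of_int (h a))"

end

theory Submission
  imports Defs
begin

text \<open>In logarithmic coordinates \<open>x = exp u\<close> the signomial \<open>f\<^sub>c\<close> becomes the exponential sum
  \<open>\<Sum>\<^sub>a \<plusminus>c\<^sub>a exp \<langle>a, u\<rangle>\<close>. Along \<open>c \<star> t\<^sup>h\<close> only the negative coefficients move, and they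
  decrease strictly in \<open>t\<close>; so the parameters \<open>t\<close> for which the signomial with coefficients
  \<open>c \<star> t\<^sup>h\<close> is copositive form an interval \<open>(0, t\<^sub>*]\<close>: it is nonempty because
  \<open>\<A>\<^sub>- \<subseteq> conv \<A>\<^sub>+\<close> (convexity of \<open>exp\<close>), bounded because the negative terms win at \<open>u = 0\<close>,
  and closed by continuity. Pushing \<open>u\<close> to infinity along an exposing normal shows that the
  truncations of a copositive signomial to faces are copositive, so below \<open>t\<^sub>*\<close> no truncation to a
  face meeting \<open>\<A>\<^sub>-\<close> has a zero. Just above \<open>t\<^sub>*\<close> the signomial takes negative values, which
  makes the signomial at \<open>t\<^sub>*\<close>, normalised by \<open>\<Sum>\<^sub>a exp \<langle>a, u\<rangle>\<close>, tend to \<open>0\<close> along a sequence;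
  a compactness argument over the faces then yields a face on which the truncation at \<open>t\<^sub>*\<close> has
  a zero. That zero is a minimum, hence a zero of the critical system, and since the terms
  outside \<open>\<Gamma>\<close> are positive, the face lies in \<open>\<Gamma>\<close> and meets \<open>\<A>\<^sub>-\<close>.\<close>

section \<open>Exponential sums\<close>

definition expsum :: "('a::real_inner \<Rightarrow> real) \<Rightarrow> 'a set \<Rightarrow> 'a \<Rightarrow> real" where
  "expsum C P u = (\<Sum>a\<in>P. C a * exp (a \<bullet> u))"

abbreviation expmass :: "'a::real_inner set \<Rightarrow> 'a \<Rightarrow> real" where
  "expmass P \<equiv> expsum (\<lambda>_. 1) P"

lemma expmass_pos: "finite P \<Longrightarrow> P \<noteq> {} \<Longrightarrow> 0 < expmass P u"
  unfolding expsum_def by (simp add: sum_pos)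

lemma exp_inner_le_expmass:
  fixes P :: "'a::real_inner set"
  assumes "finite P" "b \<in> convex hull P"
  shows "exp (b \<bullet> u) \<le> expmass P u"
proof -
  obtain l where l: "\<forall>a\<in>P. 0 \<le> l a" "sum l P = 1" "(\<Sum>a\<in>P. l a *\<^sub>R a) = b"
    using assms convex_hull_finite[OF assms(1)] by auto
  have "exp (b \<bullet> u) = exp (\<Sum>a\<in>P. l a * (a \<bullet> u))"
    unfolding l(3)[symmetric] by (simp add: inner_sum_left)
  also have "\<dots> \<le> (\<Sum>a\<in>P. l a * exp (a \<bullet> u))"
    using convex_on_sum[OF assms(1) _ exp_convex l(2)] l(1,2) by fastforce
  also have "\<dots> \<le> (\<Sum>a\<in>P. exp (a \<bullet> u))"
  proof (rule sum_mono)
    fix a assume "a \<in> P"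
    then have "l a \<le> 1" using l(1,2) member_le_sum[of a P l] assms(1) by auto
    then show "l a * exp (a \<bullet> u) \<le> exp (a \<bullet> u)" by simp
  qed
  finally show ?thesis unfolding expsum_def by simp
qed

lemma expsum_union_disjoint:
  "finite P \<Longrightarrow> finite Q \<Longrightarrow> P \<inter> Q = {} \<Longrightarrow> expsum C (P \<union> Q) u = expsum C P u + expsum C Q u"
  unfolding expsum_def by (rule sum.union_disjoint)

lemma expsum_diff_le:
  assumes "finite P" "\<And>a. a \<in> P \<Longrightarrow> C a \<le> D a"
  shows "expsum D P u - expsum C P u \<le> (\<Sum>a\<in>P. D a - C a) * expmass P u"
proof -
  have "expsum D P u - expsum C P u = (\<Sum>a\<in>P. (D a - C a) * exp (a \<bullet> u))"
    unfolding expsum_def by (simp add: sum_subtractf[symmetric] algebra_simps)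
  also have "\<dots> \<le> (\<Sum>a\<in>P. (D a - C a) * expmass P u)"
    using assms by (intro sum_mono mult_left_mono exp_inner_le_expmass hull_inc) auto
  finally show ?thesis
    by (simp add: sum_distrib_right)
qed

lemma expsum_translate:
  assumes "a0 \<in> P" "\<And>a. a \<in> P \<Longrightarrow> a \<bullet> z = a0 \<bullet> z"
  shows "expsum C P (y + z) = exp (a0 \<bullet> z) * expsum C P y"
  unfolding expsum_def sum_distrib_left
  by (rule sum.cong) (simp_all add: assms(2) inner_add_right exp_add)

lemma tendsto_expsum:
  assumes "\<And>a. a \<in> P \<Longrightarrow> ((\<lambda>x. C x a) \<longlongrightarrow> D a) F" and "(f \<longlongrightarrow> l) F"
  shows "((\<lambda>x. expsum (C x) P (f x)) \<longlongrightarrow> expsum D P l) F"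
  unfolding expsum_def by (intro tendsto_sum tendsto_mult tendsto_exp tendsto_inner tendsto_const assms)

section \<open>Faces and truncation\<close>

lemma tendsto_expsum_along_ray:
  fixes P :: "'a::real_inner set"
  assumes "finite P" "\<And>a. a \<in> P \<Longrightarrow> w \<bullet> a \<le> b"
  shows "(\<lambda>k. exp (- real k * b) * expsum C P (u + real k *\<^sub>R w))
           \<longlonglongrightarrow> expsum C {a\<in>P. w \<bullet> a = b} u"
proof -
  have "(\<lambda>k. C a * exp (a \<bullet> u) * exp (w \<bullet> a - b) ^ k)
          \<longlonglongrightarrow> (if w \<bullet> a = b then C a * exp (a \<bullet> u) else 0)" if "a \<in> P" for a
  proof (cases "w \<bullet> a = b")
    case False
    with assms(2)[OF that] have "exp (w \<bullet> a - b) < 1" by simp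
    then have "(\<lambda>k. exp (w \<bullet> a - b) ^ k) \<longlonglongrightarrow> 0" by (intro LIMSEQ_power_zero) simp
    then show ?thesis using False by (simp add: tendsto_mult_right_zero)
  qed simp
  then have "(\<lambda>k. \<Sum>a\<in>P. C a * exp (a \<bullet> u) * exp (w \<bullet> a - b) ^ k)
               \<longlonglongrightarrow> (\<Sum>a\<in>P. if w \<bullet> a = b then C a * exp (a \<bullet> u) else 0)"
    by (rule tendsto_sum)
  moreover have "(\<Sum>a\<in>P. C a * exp (a \<bullet> u) * exp (w \<bullet> a - b) ^ k)
                   = exp (- real k * b) * expsum C P (u + real k *\<^sub>R w)" for k
    unfolding expsum_def sum_distrib_left
    by (rule sum.cong)
       (simp_all add: inner_add_right inner_commute algebra_simps flip: exp_add exp_of_nat_mult)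
  ultimately show ?thesis
    using assms(1) by (simp add: expsum_def sum.inter_filter)
qed

lemma expsum_face_nonneg:
  fixes A :: "'a::euclidean_space set"
  assumes "finite A" "G face_of convex hull A" "\<And>u. 0 \<le> expsum C A u"
  shows "0 \<le> expsum C (A \<inter> G) u"
proof -
  obtain w b where hull_le: "convex hull A \<subseteq> {x. w \<bullet> x \<le> b}"
    and G: "G = convex hull A \<inter> {x. w \<bullet> x = b}"
    using exposed_face_of_polyhedron[OF polyhedron_convex_hull[OF assms(1)]] assms(2)
    unfolding exposed_face_of_def by blast
  have le: "w \<bullet> a \<le> b" if "a \<in> A" for a
    using hull_le hull_inc[OF that] by blast
  have "A \<inter> G = {a\<in>A. w \<bullet> a = b}"
    using G hull_subset[of A convex] by blast
  then have "(\<lambda>k. exp (- real k * b) * expsum C A (u + real k *\<^sub>R w)) \<longlonglongrightarrow> expsum C (A \<inter> G) u"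
    using tendsto_expsum_along_ray[OF assms(1) le] by simp
  then show ?thesis
    by (rule LIMSEQ_le_const) (use assms(3) in simp)
qed

lemma face_of_Int_supporting_hyperplane_of_points:
  fixes A :: "'a::euclidean_space set"
  assumes "finite A" "F face_of convex hull A" "\<And>a. a \<in> A \<inter> F \<Longrightarrow> v \<bullet> a \<le> m"
  shows "F \<inter> {x. v \<bullet> x = m} face_of convex hull A"
proof -
  obtain S where S: "S \<subseteq> A" "F = convex hull S"
    using face_of_convex_hull_subset[OF finite_imp_compact[OF assms(1)] assms(2)] by blast
  then have "S \<subseteq> {x. v \<bullet> x \<le> m}"
    using assms(3) hull_subset[of S convex] by blast
  then have "F \<subseteq> {x. v \<bullet> x \<le> m}"
    unfolding S(2) by (intro hull_minimal convex_halfspace_le)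
  then have "F \<inter> {x. v \<bullet> x = m} face_of F"
    by (intro face_of_Int_supporting_hyperplane_le face_of_imp_convex[OF assms(2)]) blast
  then show ?thesis using assms(2) by (rule face_of_trans)
qed

lemma subset_convex_hull_of_extreme_points:
  fixes A :: "'a::euclidean_space set"
  assumes "finite A" "{v. v extreme_point_of convex hull A} \<subseteq> B"
  shows "A \<subseteq> convex hull B"
proof -
  have "convex hull A = convex hull {v. v extreme_point_of convex hull A}"
    by (rule Krein_Milman_Minkowski[OF finite_imp_compact_convex_hull[OF assms(1)] convex_convex_hull])
  also have "\<dots> \<subseteq> convex hull B"
    using assms(2) by (rule hull_mono)
  finally show ?thesis
    using hull_subset[of A convex] by blast
qed

section \<open>Normalised exponential sums tending to zero\<close>

lemma unbounded_seq_far: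
  fixes y :: "nat \<Rightarrow> 'a::real_normed_vector"
  assumes "\<not> bounded (range y)"
  obtains \<tau> where "\<And>k. k \<le> \<tau> k" "\<And>k. real k \<le> norm (y (\<tau> k))"
proof -
  have "\<exists>j\<ge>k. real k \<le> norm (y j)" for k
  proof (rule ccontr)
    assume far: "\<not> ?thesis"
    have "norm (y j) \<le> real k + (\<Sum>i<k. norm (y i))" for j
    proof (cases "j < k")
      case True
      then have "norm (y j) \<le> (\<Sum>i<k. norm (y i))"
        by (intro member_le_sum) auto
      then show ?thesis by simp
    next
      case False
      then have "norm (y j) \<le> real k"
        using far by (meson not_le nle_le)
      moreover have "0 \<le> (\<Sum>i<k. norm (y i))"
        by (simp add: sum_nonneg)
      ultimately show ?thesis by linarith
    qed
    then show False
      using assms unfolding bounded_iff by blast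
  qed
  then show ?thesis
    using that by metis
qed

lemma unbounded_seq_direction:
  fixes y :: "nat \<Rightarrow> 'a::euclidean_space"
  assumes "\<not> bounded (range y)" "subspace S" "\<And>k. y k \<in> S"
  obtains \<sigma> v where "filterlim \<sigma> sequentially sequentially"
    "filterlim (\<lambda>k. norm (y (\<sigma> k))) at_top sequentially"
    "(\<lambda>k. y (\<sigma> k) /\<^sub>R norm (y (\<sigma> k))) \<longlonglongrightarrow> v" "norm v = 1" "v \<in> S"
proof -
  obtain \<tau> where \<tau>: "\<And>k. k \<le> \<tau> k" "\<And>k. real k \<le> norm (y (\<tau> k))"
    using unbounded_seq_far[OF assms(1)] by blast
  define dir where "dir k = y (\<tau> k) /\<^sub>R norm (y (\<tau> k))" for k
  have "norm (dir k) \<le> 1" for k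
    unfolding dir_def by (cases "y (\<tau> k) = 0") auto
  then have "bounded (range dir)"
    unfolding bounded_iff by blast
  then obtain r v where r: "strict_mono r" "(dir \<circ> r) \<longlonglongrightarrow> v"
    using bounded_imp_convergent_subsequence by blast
  have r_ge: "k \<le> \<tau> (r k)" and norm_ge: "real k \<le> norm (y (\<tau> (r k)))" for k
    using seq_suble[OF r(1), of k] \<tau>[of "r k"] by linarith+
  have "filterlim (\<lambda>k. \<tau> (r k)) sequentially sequentially"
    by (rule filterlim_at_top_mono[OF filterlim_ident]) (use r_ge in auto)
  moreover have "filterlim (\<lambda>k. norm (y (\<tau> (r k)))) at_top sequentially"
    by (rule filterlim_at_top_mono[OF filterlim_real_sequentially]) (use norm_ge in auto)
  moreover have "(\<lambda>k. y (\<tau> (r k)) /\<^sub>R norm (y (\<tau> (r k)))) \<longlonglongrightarrow> v"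
    using r(2) by (simp add: dir_def o_def)
  moreover have "norm v = 1"
  proof -
    have "norm ((dir \<circ> r) k) = 1" if "1 \<le> k" for k
    proof -
      have "norm (y (\<tau> (r k))) \<noteq> 0"
        using norm_ge[of k] that by linarith
      then show ?thesis
        by (simp add: dir_def)
    qed
    then have "(\<lambda>k. norm ((dir \<circ> r) k)) \<longlonglongrightarrow> 1"
      by (intro tendsto_eventually eventually_sequentiallyI)
    then show ?thesis
      using tendsto_norm[OF r(2)] LIMSEQ_unique by blast
  qed
  moreover have "v \<in> S"
    using closed_sequentially[OF closed_subspace[OF assms(2)] _ r(2)] assms(2,3)
    by (simp add: dir_def subspace_scale)
  ultimately show ?thesis
    using that by blast
qed

lemma filterlim_inner_at_bot_of_direction:
  fixes w :: "nat \<Rightarrow> 'a::real_inner"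
  assumes "filterlim (\<lambda>k. norm (w k)) at_top sequentially"
    and "(\<lambda>k. w k /\<^sub>R norm (w k)) \<longlonglongrightarrow> v" and "d \<bullet> v < 0"
  shows "filterlim (\<lambda>k. d \<bullet> w k) at_bot sequentially"
proof -
  have "filterlim (\<lambda>k. d \<bullet> (w k /\<^sub>R norm (w k)) * norm (w k)) at_bot sequentially"
    by (rule filterlim_tendsto_neg_mult_at_bot[OF tendsto_inner[OF tendsto_const assms(2)] assms(3,1)])
  moreover have "d \<bullet> (w k /\<^sub>R norm (w k)) * norm (w k) = d \<bullet> w k" for k
    by (cases "w k = 0") auto
  ultimately show ?thesis
    by (simp only:)
qed

lemma exp_inner_div_expmass_tendsto_zero:
  fixes w :: "nat \<Rightarrow> 'a::real_inner"
  assumes "finite Q" "b \<in> Q" "v \<bullet> a < v \<bullet> b"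
    and "filterlim (\<lambda>k. norm (w k)) at_top sequentially"
    and "(\<lambda>k. w k /\<^sub>R norm (w k)) \<longlonglongrightarrow> v"
  shows "(\<lambda>k. exp (a \<bullet> w k) / expmass Q (w k)) \<longlonglongrightarrow> 0"
proof (rule tendsto_sandwich[OF _ _ tendsto_const])
  have pos: "0 < expmass Q (w k)" for k
    using expmass_pos assms(1,2) by blast
  have "(a - b) \<bullet> v < 0"
    using assms(3) by (simp add: inner_diff_left inner_diff_right inner_commute)
  then have "filterlim (\<lambda>k. (a - b) \<bullet> w k) at_bot sequentially"
    by (rule filterlim_inner_at_bot_of_direction[OF assms(4,5)])
  then show "(\<lambda>k. exp ((a - b) \<bullet> w k)) \<longlonglongrightarrow> 0"
    by (rule filterlim_compose[OF exp_at_bot])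
  show "eventually (\<lambda>k. 0 \<le> exp (a \<bullet> w k) / expmass Q (w k)) sequentially"
    using pos by (simp add: less_imp_le)
  have "exp (a \<bullet> w k) / expmass Q (w k) \<le> exp (a \<bullet> w k) / exp (b \<bullet> w k)" for k
    using pos[of k] by (intro divide_left_mono exp_inner_le_expmass assms(1) hull_inc assms(2)) auto
  then show "eventually (\<lambda>k. exp (a \<bullet> w k) / expmass Q (w k) \<le> exp ((a - b) \<bullet> w k)) sequentially"
    by (simp add: inner_diff_left exp_diff)
qed

lemma expsum_ratio_tendsto_zero_restrict:
  fixes w :: "nat \<Rightarrow> 'a::real_inner"
  assumes "finite P" "Q \<subseteq> P" "b \<in> Q" "\<And>a. a \<in> P - Q \<Longrightarrow> v \<bullet> a < v \<bullet> b"
    and "filterlim (\<lambda>k. norm (w k)) at_top sequentially"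
    and "(\<lambda>k. w k /\<^sub>R norm (w k)) \<longlonglongrightarrow> v"
    and "(\<lambda>k. expsum C P (w k) / expmass P (w k)) \<longlonglongrightarrow> 0"
  shows "(\<lambda>k. expsum C Q (w k) / expmass Q (w k)) \<longlonglongrightarrow> 0"
proof -
  have finQ: "finite Q" and Qne: "Q \<noteq> {}"
    using assms(1-3) finite_subset by auto
  define \<rho> where "\<rho> a k = exp (a \<bullet> w k) / expmass Q (w k)" for a k
  have \<rho>_zero: "\<rho> a \<longlonglongrightarrow> 0" if "a \<in> P - Q" for a
    unfolding \<rho>_def using exp_inner_div_expmass_tendsto_zero[OF finQ assms(3) assms(4)[OF that] assms(5,6)] .
  have split: "expsum C' P u = expsum C' Q u + (\<Sum>a\<in>P - Q. C' a * exp (a \<bullet> u))" for C' u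
    unfolding expsum_def using sum.subset_diff[OF assms(2,1)] by (simp add: add.commute)
  have "expsum C Q (w k) / expmass Q (w k) =
      expsum C P (w k) / expmass P (w k) * (1 + (\<Sum>a\<in>P - Q. \<rho> a k)) - (\<Sum>a\<in>P - Q. C a * \<rho> a k)"
    for k
  proof -
    have identity: "g / m = (g + s) / (m + r) * (1 + r / m) - s / m"
      if "0 < m" "0 < m + r" for g s m r :: real
    proof -
      have "1 + r / m = (m + r) / m"
        using that(1) by (simp add: field_simps)
      then have "(g + s) / (m + r) * (1 + r / m) = (g + s) / m"
        using that(2) by simp
      then show ?thesis
        using that(1) by (simp add: field_simps)
    qed
    have "(\<Sum>a\<in>P - Q. \<rho> a k) = (\<Sum>a\<in>P - Q. exp (a \<bullet> w k)) / expmass Q (w k)"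
      "(\<Sum>a\<in>P - Q. C a * \<rho> a k) = (\<Sum>a\<in>P - Q. C a * exp (a \<bullet> w k)) / expmass Q (w k)"
      by (simp_all add: \<rho>_def sum_divide_distrib)
    moreover have "expmass P (w k) = expmass Q (w k) + (\<Sum>a\<in>P - Q. exp (a \<bullet> w k))"
      using split[of "\<lambda>_. 1"] by simp
    moreover have "0 < expmass Q (w k)" "0 < expmass P (w k)"
      using expmass_pos finQ Qne assms(1,2) by blast+
    ultimately show ?thesis
      unfolding split[of C "w k"] by (simp only: identity)
  qed
  moreover have "(\<lambda>k. expsum C P (w k) / expmass P (w k) * (1 + (\<Sum>a\<in>P - Q. \<rho> a k))
      - (\<Sum>a\<in>P - Q. C a * \<rho> a k)) \<longlonglongrightarrow> 0 * (1 + (\<Sum>a\<in>P - Q. 0)) - (\<Sum>a\<in>P - Q. C a * 0)"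
    by (intro tendsto_intros assms(7) \<rho>_zero)
  ultimately show ?thesis
    by simp
qed

lemma expsum_zero_of_ratio_tendsto_zero_bounded:
  fixes y :: "nat \<Rightarrow> 'a::euclidean_space"
  assumes "finite P" "P \<noteq> {}" "bounded (range y)"
    and "(\<lambda>k. expsum C P (y k) / expmass P (y k)) \<longlonglongrightarrow> 0"
  shows "\<exists>w. expsum C P w = 0"
proof -
  obtain r l where r: "strict_mono r" "(y \<circ> r) \<longlonglongrightarrow> l"
    using bounded_imp_convergent_subsequence[OF assms(3)] by blast
  have "(\<lambda>k. expsum C P (y (r k)) / expmass P (y (r k))) \<longlonglongrightarrow> expsum C P l / expmass P l"
    using r(2) expmass_pos[OF assms(1,2), of l]
    by (intro tendsto_divide tendsto_expsum tendsto_const) (auto simp: o_def)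
  moreover have "(\<lambda>k. expsum C P (y (r k)) / expmass P (y (r k))) \<longlonglongrightarrow> 0"
    using LIMSEQ_subseq_LIMSEQ[OF assms(4) r(1)] by (simp add: o_def)
  ultimately have "expsum C P l / expmass P l = 0"
    using LIMSEQ_unique by blast
  then show ?thesis
    using expmass_pos[OF assms(1,2), of l] by auto
qed

lemma expsum_ratio_in_span_differences:
  fixes u :: "'a::euclidean_space"
  assumes "a0 \<in> P"
  obtains y where "y \<in> span {a - b | a b. a \<in> P \<and> b \<in> P}"
    "expsum C P u / expmass P u = expsum C P y / expmass P y"
proof -
  obtain y z where y: "y \<in> span {a - b | a b. a \<in> P \<and> b \<in> P}"
    and z: "\<And>d. d \<in> span {a - b | a b. a \<in> P \<and> b \<in> P} \<Longrightarrow> orthogonal z d" and u: "u = y + z"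
    using orthogonal_subspace_decomp_exists by blast
  have "a \<bullet> z = a0 \<bullet> z" if "a \<in> P" for a
  proof -
    have "a - a0 \<in> span {a - b | a b. a \<in> P \<and> b \<in> P}"
      using that assms by (blast intro: span_base)
    then show ?thesis
      using z unfolding orthogonal_def by (force simp: inner_diff_right inner_commute)
  qed
  then have "expsum C' P u = exp (a0 \<bullet> z) * expsum C' P y" for C'
    unfolding u by (rule expsum_translate[OF assms])
  then show ?thesis
    using that[OF y] by simp
qed

lemma span_differences_nonconstant:
  fixes v :: "'a::real_inner"
  assumes "v \<in> span {a - b | a b. a \<in> P \<and> b \<in> P}" "v \<noteq> 0"
  obtains a b where "a \<in> P" "b \<in> P" "v \<bullet> a < v \<bullet> b"
proof -
  have "\<exists>a\<in>P. \<exists>b\<in>P. v \<bullet> a \<noteq> v \<bullet> b"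
  proof (rule ccontr)
    assume const: "\<not> ?thesis"
    have "orthogonal v d" if "d \<in> {a - b | a b. a \<in> P \<and> b \<in> P}" for d
    proof -
      from that obtain a b where "a \<in> P" "b \<in> P" "d = a - b" by blast
      moreover from this have "v \<bullet> a = v \<bullet> b" using const by blast
      ultimately show ?thesis by (simp add: orthogonal_def inner_diff_right)
    qed
    then have "orthogonal v v"
      using orthogonal_to_span assms(1) by blast
    with assms(2) show False
      by (simp add: orthogonal_def)
  qed
  then obtain a b where "a \<in> P" "b \<in> P" "v \<bullet> a \<noteq> v \<bullet> b"
    by blast
  then show ?thesis
    using that by (cases "v \<bullet> a < v \<bullet> b") auto
qed

lemma face_maximizing_direction:
  fixes A :: "'a::euclidean_space set"
  assumes "finite A" "F face_of convex hull A" "a1 \<in> A \<inter> F" "b1 \<in> A \<inter> F" "v \<bullet> a1 < v \<bullet> b1"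
  obtains G b where "G face_of convex hull A" "b \<in> A \<inter> G" "A \<inter> G \<subset> A \<inter> F"
    "\<forall>a\<in>A \<inter> F - A \<inter> G. v \<bullet> a < v \<bullet> b"
proof -
  define P where "P = A \<inter> F"
  have finP: "finite P"
    using assms(1) by (simp add: P_def)
  define M where "M = Max ((\<bullet>) v ` P)"
  have top: "v \<bullet> a \<le> M" if "a \<in> P" for a
    unfolding M_def using finP that by simp
  have "M \<in> (\<bullet>) v ` P"
    unfolding M_def using finP assms(3) by (intro Max_in) (auto simp: P_def)
  then obtain b where b: "b \<in> P" "v \<bullet> b = M"
    by blast
  define G where "G = F \<inter> {x. v \<bullet> x = M}"
  have AG: "A \<inter> G = {a\<in>P. v \<bullet> a = M}"
    unfolding G_def P_def by blast
  have "v \<bullet> b1 \<le> M"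
    using top assms(4) by (simp add: P_def)
  then have "a1 \<notin> A \<inter> G"
    using assms(5) unfolding AG by auto
  have "G face_of convex hull A"
    unfolding G_def using face_of_Int_supporting_hyperplane_of_points[OF assms(1,2)] top
    unfolding P_def by blast
  moreover have "b \<in> A \<inter> G"
    unfolding AG using b by simp
  moreover have "A \<inter> G \<subset> A \<inter> F"
    using \<open>a1 \<notin> A \<inter> G\<close> assms(3) unfolding G_def by blast
  moreover have "\<forall>a\<in>A \<inter> F - A \<inter> G. v \<bullet> a < v \<bullet> b"
  proof
    fix a assume "a \<in> A \<inter> F - A \<inter> G"
    then have "v \<bullet> a \<le> M" "v \<bullet> a \<noteq> M"
      using top unfolding AG P_def by auto
    then show "v \<bullet> a < v \<bullet> b"
      using b(2) by simp
  qed
  ultimately show ?thesis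
    by (rule that)
qed

lemma expsum_ratio_descend_to_face:
  fixes A :: "'a::euclidean_space set"
  assumes "finite A" "F face_of convex hull A"
    and "\<not> bounded (range y)" "\<And>k. y k \<in> span {a - b | a b. a \<in> A \<inter> F \<and> b \<in> A \<inter> F}"
    and "(\<lambda>k. expsum C (A \<inter> F) (y k) / expmass (A \<inter> F) (y k)) \<longlonglongrightarrow> 0"
  obtains G w where "G face_of convex hull A" "A \<inter> G \<noteq> {}" "card (A \<inter> G) < card (A \<inter> F)"
    "(\<lambda>k. expsum C (A \<inter> G) (w k) / expmass (A \<inter> G) (w k)) \<longlonglongrightarrow> 0"
proof -
  obtain \<sigma> v where \<sigma>: "filterlim \<sigma> sequentially sequentially"
    and norm_top: "filterlim (\<lambda>k. norm (y (\<sigma> k))) at_top sequentially"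
    and dir: "(\<lambda>k. y (\<sigma> k) /\<^sub>R norm (y (\<sigma> k))) \<longlonglongrightarrow> v"
    and "norm v = 1" and v_span: "v \<in> span {a - b | a b. a \<in> A \<inter> F \<and> b \<in> A \<inter> F}"
    using unbounded_seq_direction[OF assms(3) subspace_span assms(4)] by blast
  have "v \<noteq> 0"
    using \<open>norm v = 1\<close> by auto
  then obtain a1 b1 where "a1 \<in> A \<inter> F" "b1 \<in> A \<inter> F" "v \<bullet> a1 < v \<bullet> b1"
    using span_differences_nonconstant[OF v_span] by blast
  then obtain G b where G: "G face_of convex hull A" "b \<in> A \<inter> G" "A \<inter> G \<subset> A \<inter> F"
    and top: "\<forall>a\<in>A \<inter> F - A \<inter> G. v \<bullet> a < v \<bullet> b"
    using face_maximizing_direction[OF assms(1,2)] by blast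
  have "card (A \<inter> G) < card (A \<inter> F)"
    using psubset_card_mono[OF _ G(3)] assms(1) by blast
  moreover have "(\<lambda>k. expsum C (A \<inter> G) (y (\<sigma> k)) / expmass (A \<inter> G) (y (\<sigma> k))) \<longlonglongrightarrow> 0"
  proof (rule expsum_ratio_tendsto_zero_restrict[of "A \<inter> F" _ b v, OF _ _ G(2) _ norm_top dir])
    show "finite (A \<inter> F)" "A \<inter> G \<subseteq> A \<inter> F"
      using assms(1) G(3) by auto
    show "v \<bullet> a < v \<bullet> b" if "a \<in> A \<inter> F - A \<inter> G" for a
      using top that by blast
    show "(\<lambda>k. expsum C (A \<inter> F) (y (\<sigma> k)) / expmass (A \<inter> F) (y (\<sigma> k))) \<longlonglongrightarrow> 0"
      using filterlim_compose[OF assms(5) \<sigma>] by (simp add: o_def)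
  qed
  ultimately show ?thesis
    using G(1,2) by (intro that) auto
qed

text \<open>The ratio is invariant under translations
  orthogonal to the affine span of \<open>A \<inter> F\<close>, so the sequence can be taken in the span of the
  differences. A bounded sequence has a limit point, which is a zero; an unbounded one has a limit
  direction that is not constant on \<open>A \<inter> F\<close>, and the ratio still tends to \<open>0\<close> on the smaller
  face where this direction is maximal.\<close>

lemma face_expsum_zero_of_ratio_tendsto_zero:
  fixes A :: "'a::euclidean_space set"
  assumes "finite A" "F face_of convex hull A" "A \<inter> F \<noteq> {}"
    and "(\<lambda>k. expsum C (A \<inter> F) (u k) / expmass (A \<inter> F) (u k)) \<longlonglongrightarrow> 0"
  shows "\<exists>G w. G face_of convex hull A \<and> A \<inter> G \<noteq> {} \<and> expsum C (A \<inter> G) w = 0"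
  using assms(2-)
proof (induction "card (A \<inter> F)" arbitrary: F u rule: less_induct)
  case less
  define P where "P = A \<inter> F"
  have finP: "finite P" and Pne: "P \<noteq> {}"
    using assms(1) less.prems(2) by (auto simp: P_def)
  then obtain a0 where "a0 \<in> P"
    by blast
  then have "\<exists>y \<in> span {a - b | a b. a \<in> P \<and> b \<in> P}.
      expsum C P (u k) / expmass P (u k) = expsum C P y / expmass P y" for k
    using expsum_ratio_in_span_differences[of a0 P C "u k"] by blast
  then obtain y where y_span: "\<And>k. y k \<in> span {a - b | a b. a \<in> P \<and> b \<in> P}"
    and ratio_eq: "\<And>k. expsum C P (u k) / expmass P (u k) = expsum C P (y k) / expmass P (y k)"
    by metis
  have ratio_y: "(\<lambda>k. expsum C P (y k) / expmass P (y k)) \<longlonglongrightarrow> 0"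
    using less.prems(3) unfolding P_def[symmetric] ratio_eq .
  show ?case
  proof (cases "bounded (range y)")
    case True
    then show ?thesis
      using expsum_zero_of_ratio_tendsto_zero_bounded[OF finP Pne _ ratio_y] less.prems(1,2)
      unfolding P_def by blast
  next
    case False
    obtain G w where G: "G face_of convex hull A" "A \<inter> G \<noteq> {}" "card (A \<inter> G) < card (A \<inter> F)"
      "(\<lambda>k. expsum C (A \<inter> G) (w k) / expmass (A \<inter> G) (w k)) \<longlonglongrightarrow> 0"
      using expsum_ratio_descend_to_face[OF assms(1) less.prems(1) False]
        y_span ratio_y unfolding P_def by blast
    show ?thesis
      by (rule less.hyps[OF G(3,1,2,4)])
  qed
qed

section \<open>Signomials in logarithmic coordinates\<close>

definition vec_exp :: "real^'n \<Rightarrow> real^'n" where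
  "vec_exp u = (\<chi> i. exp (u $ i))"

lemma monom_vec_exp: "monom a (vec_exp u) = exp (a \<bullet> u)"
proof -
  have "monom a (vec_exp u) = (\<Prod>i\<in>UNIV. exp (a $ i * u $ i))"
    unfolding monom_def vec_exp_def by (simp add: powr_def mult.commute)
  also have "\<dots> = exp (a \<bullet> u)"
    by (simp add: exp_sum inner_vec_def)
  finally show ?thesis .
qed

lemma positive_orthant_eq_range_vec_exp: "positive_orthant = range vec_exp"
proof
  show "positive_orthant \<subseteq> range vec_exp"
  proof
    fix x :: "real^'n" assume "x \<in> positive_orthant"
    then have "x = vec_exp (\<chi> i. ln (x $ i))"
      unfolding positive_orthant_def vec_exp_def by (simp add: vec_eq_iff)
    then show "x \<in> range vec_exp" by blast
  qed
  show "range vec_exp \<subseteq> positive_orthant"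
    unfolding positive_orthant_def vec_exp_def by auto
qed

definition signed :: "'a set \<Rightarrow> ('a \<Rightarrow> real) \<Rightarrow> 'a \<Rightarrow> real" where
  "signed Am c a = (if a \<in> Am then - c a else c a)"

lemma signomial_vec_exp:
  assumes "finite Ap" "finite Am" "Ap \<inter> Am = {}"
  shows "signomial (Ap \<inter> G) (Am \<inter> G) c (vec_exp u) = expsum (signed Am c) ((Ap \<union> Am) \<inter> G) u"
proof -
  have "expsum (signed Am c) ((Ap \<union> Am) \<inter> G) u
      = (\<Sum>a\<in>Ap \<inter> G. signed Am c a * exp (a \<bullet> u)) + (\<Sum>a\<in>Am \<inter> G. signed Am c a * exp (a \<bullet> u))"
    unfolding expsum_def Int_Un_distrib2 using assms by (intro sum.union_disjoint) auto
  also have "(\<Sum>a\<in>Ap \<inter> G. signed Am c a * exp (a \<bullet> u)) = (\<Sum>a\<in>Ap \<inter> G. c a * monom a (vec_exp u))"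
    using assms(3) by (intro sum.cong) (auto simp: signed_def monom_vec_exp)
  also have "(\<Sum>a\<in>Am \<inter> G. signed Am c a * exp (a \<bullet> u)) = - (\<Sum>a\<in>Am \<inter> G. c a * monom a (vec_exp u))"
    by (simp add: signed_def monom_vec_exp sum_negf)
  finally show ?thesis
    unfolding signomial_def by simp
qed

lemma copositive_iff_expsum_nonneg:
  assumes "finite Ap" "finite Am" "Ap \<inter> Am = {}"
  shows "copositive Ap Am c \<longleftrightarrow> (\<forall>u. 0 \<le> expsum (signed Am c) (Ap \<union> Am) u)"
  using signomial_vec_exp[OF assms, of UNIV c]
  unfolding copositive_def positive_orthant_eq_range_vec_exp by simp

lemma signomial_differentiable_along_coordinate:
  fixes x :: "real^'n"
  assumes "0 < x $ i"
  shows "(\<lambda>s. signomial Ap Am c (\<chi> j. if j = i then s else x $ j)) differentiable (at (x $ i))"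
proof -
  define K where "K a = (\<Prod>j\<in>UNIV - {i}. x $ j powr a $ j)" for a :: "real^'n"
  have "monom a (\<chi> j. if j = i then s else x $ j) = K a * s powr (a $ i)" for a s
  proof -
    have "(\<Prod>j\<in>UNIV - {i}. (if j = i then s else x $ j) powr a $ j) = K a"
      unfolding K_def by (rule prod.cong) auto
    then show ?thesis
      unfolding monom_def by (simp add: prod.remove[of UNIV i] mult.commute)
  qed
  then have "(\<lambda>s. signomial Ap Am c (\<chi> j. if j = i then s else x $ j)) =
      (\<lambda>s. (\<Sum>a\<in>Ap. c a * K a * s powr (a $ i)) - (\<Sum>b\<in>Am. c b * K b * s powr (b $ i)))"
    unfolding signomial_def by (simp add: mult.assoc)
  then show ?thesis
    unfolding real_differentiable_def
    by (auto intro!: derivative_eq_intros has_real_derivative_powr assms)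
qed

lemma partial_eq_0_at_min:
  fixes g :: "real^'n \<Rightarrow> real"
  assumes "x \<in> positive_orthant" "\<And>y. y \<in> positive_orthant \<Longrightarrow> g x \<le> g y"
    and "(\<lambda>s. g (\<chi> j. if j = i then s else x $ j)) differentiable (at (x $ i))"
  shows "partial g i x = 0"
proof -
  define \<phi> where "\<phi> s = g (\<chi> j. if j = i then s else x $ j)" for s
  obtain D where D: "(\<phi> has_real_derivative D) (at (x $ i))"
    using assms(3) unfolding real_differentiable_def \<phi>_def by blast
  have xi: "0 < x $ i"
    using assms(1) unfolding positive_orthant_def by simp
  have "D = 0"
  proof (rule DERIV_local_min[OF D xi], intro allI impI)
    fix s assume "\<bar>x $ i - s\<bar> < x $ i"
    then have "(\<chi> j. if j = i then s else x $ j) \<in> positive_orthant"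
      using assms(1) unfolding positive_orthant_def by auto
    moreover have "(\<chi> j. if j = i then x $ i else x $ j) = x"
      by (simp add: vec_eq_iff)
    ultimately show "\<phi> (x $ i) \<le> \<phi> s"
      unfolding \<phi>_def using assms(2) by simp
  qed
  then show ?thesis
    using DERIV_imp_deriv[OF D] unfolding partial_def \<phi>_def by simp
qed

lemma critical_zero_of_nonneg:
  assumes "x \<in> positive_orthant" "signomial Ap Am c x = 0"
    and "\<And>y. y \<in> positive_orthant \<Longrightarrow> 0 \<le> signomial Ap Am c y"
  shows "critical_zero Ap Am c x"
  unfolding critical_zero_def
proof (intro conjI allI assms(2))
  fix i
  have "0 < x $ i"
    using assms(1) unfolding positive_orthant_def by simp
  then have "partial (signomial Ap Am c) i x = 0"
    using assms by (intro partial_eq_0_at_min signomial_differentiable_along_coordinate) auto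
  then show "x $ i * partial (signomial Ap Am c) i x = 0"
    by simp
qed

section \<open>The lifted family\<close>

locale lifted_signomial =
  fixes Ap Am :: "(real^'n) set" and c :: "real^'n \<Rightarrow> real" and h :: "real^'n \<Rightarrow> int"
  assumes finite_Ap: "finite Ap" and finite_Am: "finite Am" and disjoint: "Ap \<inter> Am = {}"
    and Am_nonempty: "Am \<noteq> {}" and Am_in_hull: "Am \<subseteq> convex hull Ap"
    and coeff_pos: "\<And>a. a \<in> Ap \<union> Am \<Longrightarrow> 0 < c a" and lifts: "lifts h Ap Am"
begin

definition coef :: "real \<Rightarrow> real^'n \<Rightarrow> real" where
  "coef t = signed Am (star_pow c t h)"

definition copositive_params :: "real set" where
  "copositive_params = {t. 0 < t \<and> copositive Ap Am (star_pow c t h)}"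

text \<open>The paper introduces \<open>t\<^sub>*\<close> as the minimum of \<open>S\<close>; here it is defined as the supremum
  of the parameters giving a copositive signomial, and \<open>theorem2p7\<close> identifies the two.\<close>

definition t_star :: real where
  "t_star = Sup copositive_params"

lemma finite_support: "finite (Ap \<union> Am)"
  using finite_Ap finite_Am by simp

\<comment> \<open>The hypothesis \<open>0 < t\<close> is needed because \<open>0 powr 0 = 0\<close>.\<close>
lemma coef_Ap: "a \<in> Ap \<Longrightarrow> 0 < t \<Longrightarrow> coef t a = c a"
  using lifts disjoint by (auto simp: coef_def signed_def star_pow_def lifts_def)

lemma coef_Am: "a \<in> Am \<Longrightarrow> coef t a = - (c a * t powr h a)"
  by (simp add: coef_def signed_def star_pow_def)

lemma one_le_height:
  assumes "a \<in> Am"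
  shows "1 \<le> real_of_int (h a)"
proof -
  have "0 < h a"
    using lifts assms by (simp add: lifts_def)
  then show ?thesis by simp
qed

lemma coef_strict_antimono: "a \<in> Am \<Longrightarrow> 0 < t \<Longrightarrow> t < t' \<Longrightarrow> coef t' a < coef t a"
  using coeff_pos[of a] one_le_height[of a] powr_less_mono2[of "h a" t t']
  by (simp add: coef_Am)

lemma coef_antimono: "a \<in> Ap \<union> Am \<Longrightarrow> 0 < t \<Longrightarrow> t \<le> t' \<Longrightarrow> coef t' a \<le> coef t a"
  using coef_strict_antimono[of a t t'] by (cases "t = t'") (auto simp: coef_Ap)

lemma expsum_coef_antimono:
  "P \<subseteq> Ap \<union> Am \<Longrightarrow> 0 < t \<Longrightarrow> t \<le> t' \<Longrightarrow> expsum (coef t') P u \<le> expsum (coef t) P u"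
  unfolding expsum_def by (intro sum_mono mult_right_mono coef_antimono) auto

lemma expsum_coef_strict_antimono:
  assumes "P \<subseteq> Ap \<union> Am" "P \<inter> Am \<noteq> {}" "0 < t" "t < t'"
  shows "expsum (coef t') P u < expsum (coef t) P u"
  unfolding expsum_def
proof (rule sum_strict_mono_ex1)
  show "finite P"
    using assms(1) finite_support finite_subset by blast
  show "\<forall>a\<in>P. coef t' a * exp (a \<bullet> u) \<le> coef t a * exp (a \<bullet> u)"
    using assms by (auto intro: mult_right_mono coef_antimono)
  show "\<exists>a\<in>P. coef t' a * exp (a \<bullet> u) < coef t a * exp (a \<bullet> u)"
    using assms(2-4) coef_strict_antimono by auto
qed

lemma expsum_coef_pos:
  assumes "P \<subseteq> Ap \<union> Am" "P \<inter> Am = {}" "P \<noteq> {}" "0 < t"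
  shows "0 < expsum (coef t) P u"
  unfolding expsum_def
  using assms finite_support finite_subset coeff_pos coef_Ap by (intro sum_pos) auto

lemma tendsto_coef: "(f \<longlongrightarrow> t) F \<Longrightarrow> 0 < t \<Longrightarrow> ((\<lambda>x. coef (f x) a) \<longlongrightarrow> coef t a) F"
  unfolding coef_def signed_def star_pow_def by (auto intro!: tendsto_intros)

lemma mem_copositive_params_iff:
  "t \<in> copositive_params \<longleftrightarrow> 0 < t \<and> (\<forall>u. 0 \<le> expsum (coef t) (Ap \<union> Am) u)"
  unfolding copositive_params_def coef_def
  using copositive_iff_expsum_nonneg[OF finite_Ap finite_Am disjoint] by simp

lemma copositive_params_downward_closed:
  "t' \<in> copositive_params \<Longrightarrow> 0 < t \<Longrightarrow> t \<le> t' \<Longrightarrow> t \<in> copositive_params"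
  unfolding mem_copositive_params_iff using expsum_coef_antimono[of "Ap \<union> Am" t t']
  by (meson order_trans subset_refl)

lemma bdd_above_copositive_params: "bdd_above copositive_params"
proof -
  obtain b where b: "b \<in> Am"
    using Am_nonempty by blast
  have cb: "0 < c b"
    using coeff_pos b by blast
  have "t \<le> max 1 (sum c Ap / c b)" if "t \<in> copositive_params" for t
  proof (rule ccontr)
    assume "\<not> ?thesis"
    then have "1 < t" "sum c Ap / c b < t"
      by auto
    then have "sum c Ap < c b * t"
      using cb by (simp add: divide_less_eq mult.commute)
    have "expsum (coef t) (Ap \<union> Am) 0 = (\<Sum>a\<in>Ap. coef t a) + (\<Sum>a\<in>Am. coef t a)"
      unfolding expsum_def using finite_Ap finite_Am disjoint by (simp add: sum.union_disjoint)
    also have "(\<Sum>a\<in>Ap. coef t a) = sum c Ap"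
      using \<open>1 < t\<close> by (intro sum.cong) (auto simp: coef_Ap)
    also have "(\<Sum>a\<in>Am. coef t a) \<le> coef t b"
    proof -
      have "0 \<le> c a * t powr h a" if "a \<in> Am" for a
        using coeff_pos[of a] that by simp
      then have "(\<Sum>a\<in>Am - {b}. coef t a) \<le> 0"
        by (intro sum_nonpos) (simp add: coef_Am)
      then show ?thesis
        using sum.remove[OF finite_Am b, of "coef t"] by simp
    qed
    also have "coef t b \<le> - (c b * t)"
      using powr_mono[OF one_le_height[OF b], of t] \<open>1 < t\<close> cb by (simp add: coef_Am[OF b])
    finally have "expsum (coef t) (Ap \<union> Am) 0 < 0"
      using \<open>sum c Ap < c b * t\<close> by linarith
    moreover have "0 \<le> expsum (coef t) (Ap \<union> Am) 0"
      using that unfolding mem_copositive_params_iff by blast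
    ultimately show False
      by linarith
  qed
  then show ?thesis
    unfolding bdd_above_def by blast
qed

lemma expsum_coef_lower_bound:
  assumes "0 < t" "t \<le> 1"
  shows "(Min (c ` Ap) - t * sum c Am) * expmass Ap u \<le> expsum (coef t) (Ap \<union> Am) u"
proof -
  have "Min (c ` Ap) * expmass Ap u \<le> (\<Sum>a\<in>Ap. coef t a * exp (a \<bullet> u))"
    unfolding expsum_def sum_distrib_left using finite_Ap assms(1)
    by (intro sum_mono mult_right_mono) (auto simp: coef_Ap)
  moreover have "(\<Sum>a\<in>Am. c a * t powr h a * exp (a \<bullet> u)) \<le> t * sum c Am * expmass Ap u"
  proof -
    have "c a * t powr h a * exp (a \<bullet> u) \<le> c a * (t * expmass Ap u)" if "a \<in> Am" for a
      using powr_le_one_le[OF assms one_le_height[OF that]] coeff_pos[of a] that assms(1)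
        exp_inner_le_expmass[OF finite_Ap subsetD[OF Am_in_hull that], of u]
      by (simp add: mult.assoc mult_mono)
    then have "(\<Sum>a\<in>Am. c a * t powr h a * exp (a \<bullet> u)) \<le> (\<Sum>a\<in>Am. c a * (t * expmass Ap u))"
      by (rule sum_mono)
    also have "\<dots> = t * sum c Am * expmass Ap u"
      unfolding sum_distrib_right[symmetric] by (simp add: ac_simps)
    finally show ?thesis .
  qed
  ultimately show ?thesis
    unfolding expsum_def using finite_Ap finite_Am disjoint
    by (simp add: sum.union_disjoint coef_Am sum_negf algebra_simps)
qed

lemma copositive_params_nonempty: "copositive_params \<noteq> {}"
proof -
  have "Ap \<noteq> {}"
    using Am_nonempty Am_in_hull by auto
  then have m: "0 < Min (c ` Ap)"
    using finite_Ap coeff_pos by (subst Min_gr_iff) auto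
  have sC: "0 \<le> sum c Am"
    using coeff_pos by (simp add: sum_nonneg less_imp_le)
  define t where "t = min 1 (Min (c ` Ap) / (sum c Am + 1))"
  have t: "0 < t" "t \<le> 1"
    unfolding t_def using m sC by auto
  have "t \<le> Min (c ` Ap) / (sum c Am + 1)"
    unfolding t_def by simp
  then have "t * sum c Am \<le> Min (c ` Ap)"
    using sC t(1) by (simp add: le_divide_eq algebra_simps)
  then have "0 \<le> (Min (c ` Ap) - t * sum c Am) * expmass Ap u" for u
    using expmass_pos[OF finite_Ap \<open>Ap \<noteq> {}\<close>, of u] by simp
  then have "0 \<le> expsum (coef t) (Ap \<union> Am) u" for u
    using expsum_coef_lower_bound[OF t, of u] by (rule order_trans)
  then have "t \<in> copositive_params"
    using t(1) unfolding mem_copositive_params_iff by blast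
  then show ?thesis
    by blast
qed

lemma t_star_pos: "0 < t_star"
proof -
  obtain t where "t \<in> copositive_params"
    using copositive_params_nonempty by blast
  then show ?thesis
    unfolding t_star_def using cSup_upper[OF _ bdd_above_copositive_params]
    by (fastforce simp: mem_copositive_params_iff)
qed

lemma t_star_mem: "t_star \<in> copositive_params"
proof -
  obtain s where s: "\<And>k. s k \<in> copositive_params" "s \<longlonglongrightarrow> t_star"
    using closure_contains_Sup[OF copositive_params_nonempty bdd_above_copositive_params]
    unfolding t_star_def closure_sequential by blast
  have "0 \<le> expsum (coef t_star) (Ap \<union> Am) u" for u
    using s(1) by (intro LIMSEQ_le_const[OF tendsto_expsum[OF tendsto_coef[OF s(2) t_star_pos]]])
      (auto simp: mem_copositive_params_iff)
  then show ?thesis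
    using t_star_pos by (simp add: mem_copositive_params_iff)
qed

lemma copositive_iff_one_le_t_star: "copositive Ap Am c \<longleftrightarrow> 1 \<le> t_star"
proof -
  have "star_pow c 1 h = c"
    by (simp add: star_pow_def fun_eq_iff)
  then have "copositive Ap Am c \<longleftrightarrow> 1 \<in> copositive_params"
    by (simp add: copositive_params_def)
  also have "\<dots> \<longleftrightarrow> 1 \<le> t_star"
    using cSup_upper[OF _ bdd_above_copositive_params] copositive_params_downward_closed[OF t_star_mem]
    unfolding t_star_def by auto
  finally show ?thesis .
qed

lemma expsum_face_nonneg_t_star:
  "G face_of convex hull (Ap \<union> Am) \<Longrightarrow> 0 \<le> expsum (coef t_star) ((Ap \<union> Am) \<inter> G) u"
  using t_star_mem finite_support
  by (intro expsum_face_nonneg) (auto simp: mem_copositive_params_iff)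

lemma t_star_le_of_face_zero:
  assumes "G face_of convex hull (Ap \<union> Am)" "G \<inter> Am \<noteq> {}" "0 < t"
    and "x \<in> positive_orthant" "signomial (Ap \<inter> G) (Am \<inter> G) (star_pow c t h) x = 0"
  shows "t_star \<le> t"
proof (rule ccontr)
  assume "\<not> t_star \<le> t"
  obtain u where "x = vec_exp u"
    using assms(4) positive_orthant_eq_range_vec_exp by blast
  then have "expsum (coef t) ((Ap \<union> Am) \<inter> G) u = 0"
    using assms(5) signomial_vec_exp[OF finite_Ap finite_Am disjoint] by (simp add: coef_def)
  moreover have "expsum (coef t_star) ((Ap \<union> Am) \<inter> G) u < expsum (coef t) ((Ap \<union> Am) \<inter> G) u"
    using assms(2,3) \<open>\<not> t_star \<le> t\<close> by (intro expsum_coef_strict_antimono) auto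
  ultimately show False
    using expsum_face_nonneg_t_star[OF assms(1), of u] by linarith
qed

lemma expsum_ratio_t_star_tendsto_zero:
  obtains U where "(\<lambda>k. expsum (coef t_star) (Ap \<union> Am) (U k) / expmass (Ap \<union> Am) (U k)) \<longlonglongrightarrow> 0"
proof -
  define s where "s k = t_star + 1 / Suc k" for k
  have s: "s \<longlonglongrightarrow> t_star"
    unfolding s_def using tendsto_add[OF tendsto_const LIMSEQ_inverse_real_of_nat] by (simp add: inverse_eq_divide)
  have "s k \<notin> copositive_params" for k
    using cSup_upper[OF _ bdd_above_copositive_params] unfolding s_def t_star_def by force
  moreover have "0 < s k" for k
    using t_star_pos by (simp add: s_def add_pos_pos)
  ultimately have "\<exists>u. expsum (coef (s k)) (Ap \<union> Am) u < 0" for k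
    unfolding mem_copositive_params_iff by (auto simp: not_le)
  then obtain U where U: "\<And>k. expsum (coef (s k)) (Ap \<union> Am) (U k) < 0"
    by metis
  define \<epsilon> where "\<epsilon> k = (\<Sum>a\<in>Ap \<union> Am. coef t_star a - coef (s k) a)" for k
  have "\<epsilon> \<longlonglongrightarrow> (\<Sum>a\<in>Ap \<union> Am. coef t_star a - coef t_star a)"
    unfolding \<epsilon>_def by (intro tendsto_intros tendsto_coef[OF s t_star_pos])
  then have \<epsilon>: "\<epsilon> \<longlonglongrightarrow> 0"
    by simp
  have "expsum (coef t_star) (Ap \<union> Am) (U k) / expmass (Ap \<union> Am) (U k) \<le> \<epsilon> k" for k
  proof -
    have "expsum (coef t_star) (Ap \<union> Am) (U k) - expsum (coef (s k)) (Ap \<union> Am) (U k)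
        \<le> \<epsilon> k * expmass (Ap \<union> Am) (U k)"
      unfolding \<epsilon>_def using t_star_pos
      by (intro expsum_diff_le finite_support coef_antimono) (auto simp: s_def)
    then show ?thesis
      using U[of k] expmass_pos[OF finite_support, of "U k"] Am_nonempty
      by (simp add: pos_divide_le_eq)
  qed
  moreover have "0 \<le> expsum (coef t_star) (Ap \<union> Am) (U k) / expmass (Ap \<union> Am) (U k)" for k
    using t_star_mem expmass_pos[OF finite_support, of "U k"] Am_nonempty
    by (simp add: mem_copositive_params_iff)
  ultimately have "(\<lambda>k. expsum (coef t_star) (Ap \<union> Am) (U k) / expmass (Ap \<union> Am) (U k)) \<longlonglongrightarrow> 0"
    by (intro tendsto_sandwich[OF _ _ tendsto_const \<epsilon>]) (simp_all add: always_eventually)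
  then show ?thesis
    by (rule that)
qed

lemma expsum_face_zero_at_t_star:
  obtains G w where "G face_of convex hull (Ap \<union> Am)" "(Ap \<union> Am) \<inter> G \<noteq> {}"
    "expsum (coef t_star) ((Ap \<union> Am) \<inter> G) w = 0"
proof -
  obtain U where "(\<lambda>k. expsum (coef t_star) (Ap \<union> Am) (U k) / expmass (Ap \<union> Am) (U k)) \<longlonglongrightarrow> 0"
    using expsum_ratio_t_star_tendsto_zero by blast
  moreover have "(Ap \<union> Am) \<inter> convex hull (Ap \<union> Am) = Ap \<union> Am"
    using hull_subset[of "Ap \<union> Am" convex] by blast
  ultimately have "\<exists>G w. G face_of convex hull (Ap \<union> Am) \<and> (Ap \<union> Am) \<inter> G \<noteq> {}
      \<and> expsum (coef t_star) ((Ap \<union> Am) \<inter> G) w = 0"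
    using face_expsum_zero_of_ratio_tendsto_zero[OF finite_support face_of_refl[OF convex_convex_hull]]
      Am_nonempty by simp
  then show ?thesis
    using that by blast
qed

lemma expsum_face_zero_at_t_star_subset:
  assumes "\<Gamma> face_of convex hull (Ap \<union> Am)" "Am \<subseteq> \<Gamma>" "G face_of convex hull (Ap \<union> Am)"
    and zero: "expsum (coef t_star) ((Ap \<union> Am) \<inter> G) w = 0"
  shows "(Ap \<union> Am) \<inter> G \<subseteq> \<Gamma>"
proof (rule ccontr)
  assume "\<not> ?thesis"
  then have "0 < expsum (coef t_star) ((Ap \<union> Am) \<inter> G - \<Gamma>) w"
    using assms(2) t_star_pos by (intro expsum_coef_pos) auto
  moreover have "expsum (coef t_star) ((Ap \<union> Am) \<inter> G) w
      = expsum (coef t_star) ((Ap \<union> Am) \<inter> G \<inter> \<Gamma>) w + expsum (coef t_star) ((Ap \<union> Am) \<inter> G - \<Gamma>) w"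
    using expsum_union_disjoint[of "(Ap \<union> Am) \<inter> G \<inter> \<Gamma>" "(Ap \<union> Am) \<inter> G - \<Gamma>"] finite_support
    by (simp only: Int_Diff_Un) auto
  moreover have "(Ap \<union> Am) \<inter> (G \<inter> \<Gamma>) = (Ap \<union> Am) \<inter> G \<inter> \<Gamma>"
    by blast
  then have "0 \<le> expsum (coef t_star) ((Ap \<union> Am) \<inter> G \<inter> \<Gamma>) w"
    using expsum_face_nonneg_t_star[OF face_of_Int[OF assms(3,1)], of w] by simp
  ultimately show False
    using zero by linarith
qed

lemma critical_zero_at_t_star:
  assumes "G face_of convex hull (Ap \<union> Am)" "expsum (coef t_star) ((Ap \<union> Am) \<inter> G) w = 0"
  shows "critical_zero (Ap \<inter> G) (Am \<inter> G) (star_pow c t_star h) (vec_exp w)"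
proof (rule critical_zero_of_nonneg)
  show "vec_exp w \<in> positive_orthant"
    unfolding positive_orthant_eq_range_vec_exp by blast
  show "signomial (Ap \<inter> G) (Am \<inter> G) (star_pow c t_star h) (vec_exp w) = 0"
    using assms(2) signomial_vec_exp[OF finite_Ap finite_Am disjoint] by (simp add: coef_def)
  show "0 \<le> signomial (Ap \<inter> G) (Am \<inter> G) (star_pow c t_star h) y" if "y \<in> positive_orthant" for y
    using that expsum_face_nonneg_t_star[OF assms(1)] signomial_vec_exp[OF finite_Ap finite_Am disjoint]
    unfolding positive_orthant_eq_range_vec_exp by (auto simp: coef_def)
qed

lemma critical_face_at_t_star:
  assumes \<Gamma>: "\<Gamma> face_of convex hull (Ap \<union> Am)" and "Am \<subseteq> \<Gamma>"
  obtains \<Gamma>' x where "\<Gamma>' face_of \<Gamma>" "\<Gamma>' \<inter> Am \<noteq> {}" "x \<in> positive_orthant"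
    "critical_zero (Ap \<inter> \<Gamma>') (Am \<inter> \<Gamma>') (star_pow c t_star h) x"
proof -
  obtain G w where G: "G face_of convex hull (Ap \<union> Am)" "(Ap \<union> Am) \<inter> G \<noteq> {}"
    and zero: "expsum (coef t_star) ((Ap \<union> Am) \<inter> G) w = 0"
    by (rule expsum_face_zero_at_t_star)
  define \<Gamma>' where "\<Gamma>' = G \<inter> \<Gamma>"
  have \<Gamma>'_face: "\<Gamma>' face_of convex hull (Ap \<union> Am)"
    unfolding \<Gamma>'_def using G(1) \<Gamma> by (rule face_of_Int)
  have same: "(Ap \<union> Am) \<inter> \<Gamma>' = (Ap \<union> Am) \<inter> G"
    using expsum_face_zero_at_t_star_subset[OF assms G(1) zero] unfolding \<Gamma>'_def by blast
  have "\<Gamma>' face_of \<Gamma>"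
    using \<Gamma>'_face face_of_imp_subset[OF \<Gamma>] unfolding \<Gamma>'_def by (auto intro: face_of_subset)
  moreover have "\<Gamma>' \<inter> Am \<noteq> {}"
  proof
    assume "\<Gamma>' \<inter> Am = {}"
    then have "0 < expsum (coef t_star) ((Ap \<union> Am) \<inter> \<Gamma>') w"
      using G(2) t_star_pos unfolding same by (intro expsum_coef_pos) (auto simp: same[symmetric])
    then show False
      using zero unfolding same by simp
  qed
  moreover have "critical_zero (Ap \<inter> \<Gamma>') (Am \<inter> \<Gamma>') (star_pow c t_star h) (vec_exp w)"
    using critical_zero_at_t_star[OF \<Gamma>'_face] zero unfolding same by blast
  ultimately show ?thesis
    using that positive_orthant_eq_range_vec_exp by blast
qed

end

theorem theorem2p7:
  fixes Ap Am :: "(real^'n) set" and c :: "real^'n \<Rightarrow> real"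
    and h :: "real^'n \<Rightarrow> int" and \<Gamma> :: "(real^'n) set"
  assumes "finite Ap" and "finite Am" and "Ap \<inter> Am = {}"
    and "\<forall>a\<in>Ap \<union> Am. \<forall>i. a $ i \<in> \<int>"
    and "Am \<noteq> {}"
    and "{v. v extreme_point_of (convex hull (Ap \<union> Am))} \<subseteq> Ap"
    and "\<Gamma> face_of convex hull (Ap \<union> Am)" and "Am \<subseteq> \<Gamma>"
    and "\<forall>\<Gamma>'. \<Gamma>' face_of convex hull (Ap \<union> Am) \<and> Am \<subseteq> \<Gamma>' \<longrightarrow> \<Gamma> \<subseteq> \<Gamma>'"
    and "\<forall>a\<in>Ap \<union> Am. 0 < c a"
    and "lifts h Ap Am"
  defines "J \<equiv> {\<Gamma>'. \<Gamma>' face_of \<Gamma> \<and> \<Gamma>' \<inter> Am \<noteq> {}}"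
  defines "S \<equiv> (\<Union>\<Gamma>'\<in>J. {t::real. 0 < t \<and>
              (\<exists>x\<in>positive_orthant. critical_zero (Ap \<inter> \<Gamma>') (Am \<inter> \<Gamma>') (star_pow c t h) x)})"
  shows "\<exists>tstar. tstar \<in> S \<and> (\<forall>t\<in>S. tstar \<le> t) \<and> (copositive Ap Am c \<longleftrightarrow> 1 \<le> tstar)"
proof -
  interpret lifted_signomial Ap Am c h
  proof
    show "Am \<subseteq> convex hull Ap"
      using subset_convex_hull_of_extreme_points[OF _ assms(6)] assms(1,2) by blast
  qed (use assms in auto)
  have "t_star \<in> S"
    using critical_face_at_t_star[OF assms(7,8)] t_star_pos unfolding S_def J_def by blast
  moreover have "t_star \<le> t" if "t \<in> S" for t
  proof -
    obtain \<Gamma>' x where "\<Gamma>' face_of \<Gamma>" "\<Gamma>' \<inter> Am \<noteq> {}" "0 < t" "x \<in> positive_orthant"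
      "critical_zero (Ap \<inter> \<Gamma>') (Am \<inter> \<Gamma>') (star_pow c t h) x"
      using \<open>t \<in> S\<close> unfolding S_def J_def by blast
    then show ?thesis
      using t_star_le_of_face_zero face_of_trans[OF _ assms(7)] unfolding critical_zero_def by blast
  qed
  ultimately show ?thesis
    using copositive_iff_one_le_t_star by blast
qed

end
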